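(* Let $p>0$ and let $(u_n)_{n\ge0}$ be a sequence in $E^1$ which is $E_p$ summable to $\mu\in E^1$. If $\sqrt{n}\,D(u_{n-1},u_n)=O(1)$ as $n\to\infty$, then $(u_n)$ is bounded, i.e. there is $M>0$ with $D(u_n,\overline{0})<M$ for all $n$.
   Context: $E^1$ denotes the set of fuzzy numbers: functions $u:\mathbb{R}\to[0,1]$ that are normal, fuzzy convex, upper semicontinuous, and have compact support $\overline{\{t:u(t)>0\}}$. For $\alpha\in(0,1]$ the $\alpha$-level set is $[u]_\alpha=\{t:u(t)\ge\alpha\}$ and $[u]_0=\overline{\{t:u(t)>0\}}$; each is a compact interval $[u^-_\alpha,u^+_\alpha]$. Addition and scalar multiplication are defined levelwise: $[u+v]_\alpha=[u^-_\alpha+v^-_\alpha,u^+_\alpha+v^+_\alpha]$ and $[ku]_\alpha=k[u]_\alpha$ for $k\in\mathbb{R}$. The metric is $D(u,v)=\sup_{\alpha\in[0,1]}\max\{|u^-_\alpha-v^-_\alpha|,|u^+_\alpha-v^+_\alpha|\}$. $\overline{0}$ is the fuzzy number equal to $1$ at $0$ and $0$ elsewhere. For $p>0$ the Euler means are $t^{p}_n=\frac{1}{(p+1)^n}\sum_{k=0}^n\binom{n}{k}p^{n-k}u_k$, and $(u_n)$ is $E_p$ summable to $\mu$ if $D(t^p_n,\mu)\to0$. *)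

theory Defs
  imports "HOL-Analysis.Analysis" "HOL-Library.Landau_Symbols"
begin

type_synonym fuzzy = "real \<Rightarrow> real"

definition usc :: "fuzzy \<Rightarrow> bool" where
  "usc u \<longleftrightarrow> (\<forall>x e. e > 0 \<longrightarrow> eventually (\<lambda>y. u y < u x + e) (at x))"

definition fuzzy_number :: "fuzzy \<Rightarrow> bool" where
  "fuzzy_number u \<longleftrightarrow>
     (\<forall>t. 0 \<le> u t \<and> u t \<le> 1)
   \<and> (\<exists>t. u t = 1)
   \<and> (\<forall>x y l. 0 \<le> l \<and> l \<le> 1 \<longrightarrow> min (u x) (u y) \<le> u (l * x + (1 - l) * y))
   \<and> usc u
   \<and> compact (closure {t. u t > 0})"

definition levelset :: "fuzzy \<Rightarrow> real \<Rightarrow> real set" where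
  "levelset u \<alpha> = (if \<alpha> = 0 then closure {t. u t > 0} else {t. \<alpha> \<le> u t})"

definition lo :: "fuzzy \<Rightarrow> real \<Rightarrow> real" where
  "lo u \<alpha> = Inf (levelset u \<alpha>)"

definition hi :: "fuzzy \<Rightarrow> real \<Rightarrow> real" where
  "hi u \<alpha> = Sup (levelset u \<alpha>)"

text \<open>The fuzzy number whose alpha-level sets (alpha in (0,1]) are [L alpha, H alpha].\<close>
definition from_levels :: "(real \<Rightarrow> real) \<Rightarrow> (real \<Rightarrow> real) \<Rightarrow> fuzzy" where
  "from_levels L H = (\<lambda>t. Sup ({0} \<union> {\<alpha>. 0 < \<alpha> \<and> \<alpha> \<le> 1 \<and> L \<alpha> \<le> t \<and> t \<le> H \<alpha>}))"

definition fadd :: "fuzzy \<Rightarrow> fuzzy \<Rightarrow> fuzzy" where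
  "fadd u v = from_levels (\<lambda>\<alpha>. lo u \<alpha> + lo v \<alpha>) (\<lambda>\<alpha>. hi u \<alpha> + hi v \<alpha>)"

definition fscale :: "real \<Rightarrow> fuzzy \<Rightarrow> fuzzy" where
  "fscale k u = from_levels (\<lambda>\<alpha>. min (k * lo u \<alpha>) (k * hi u \<alpha>))
                            (\<lambda>\<alpha>. max (k * lo u \<alpha>) (k * hi u \<alpha>))"

definition fzero :: fuzzy where
  "fzero = (\<lambda>t. if t = 0 then 1 else 0)"

definition fdist :: "fuzzy \<Rightarrow> fuzzy \<Rightarrow> real" where
  "fdist u v = (SUP \<alpha>\<in>{0..1}. max \<bar>lo u \<alpha> - lo v \<alpha>\<bar> \<bar>hi u \<alpha> - hi v \<alpha>\<bar>)"

fun fsum_upto :: "(nat \<Rightarrow> fuzzy) \<Rightarrow> nat \<Rightarrow> fuzzy" where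
  "fsum_upto f 0 = f 0"
| "fsum_upto f (Suc n) = fadd (fsum_upto f n) (f (Suc n))"

definition euler_mean :: "real \<Rightarrow> (nat \<Rightarrow> fuzzy) \<Rightarrow> nat \<Rightarrow> fuzzy" where
  "euler_mean p u n = fscale (1 / (p + 1) ^ n)
     (fsum_upto (\<lambda>k. fscale (real (n choose k) * p ^ (n - k)) (u k)) n)"

definition Ep_summable_to :: "real \<Rightarrow> (nat \<Rightarrow> fuzzy) \<Rightarrow> fuzzy \<Rightarrow> bool" where
  "Ep_summable_to p u \<mu> \<longleftrightarrow> (\<lambda>n. fdist (euler_mean p u n) \<mu>) \<longlonglongrightarrow> 0"

end

theory Submission
  imports Defs
begin

text \<open>Fix a level \<open>\<alpha> \<in> (0,1]\<close> and let \<open>a k\<close> be the left (or right) endpoint of the \<open>\<alpha>\<close>-level of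
  \<open>u k\<close>. The hypothesis gives \<open>|a k - a (k-1)| \<le> C / sqrt k\<close>, which telescopes to
  \<open>|a k - a m| \<le> 2C |sqrt k - sqrt m| \<le> C (1 + (k - m)\<^sup>2 / m)\<close>. The Euler weights of order \<open>n\<close> form a
  binomial distribution with mean \<open>n / (p+1)\<close> and variance \<open>n p / (p+1)\<^sup>2\<close>; taking \<open>n \<approx> m (p+1)\<close> and
  averaging gives \<open>|a m - \<Sum>k. w k * a k| \<le> 3C\<close>. The weighted sum lies between the endpoints of the
  \<open>\<alpha>\<close>-level of the Euler mean, which stay bounded uniformly in \<open>n\<close> and \<open>\<alpha>\<close> because the means converge
  to \<open>\<mu>\<close>. So \<open>|a m|\<close> is bounded uniformly in \<open>m\<close> and \<open>\<alpha>\<close>, and so is \<open>D(u m, 0)\<close>.\<close>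

lemma sum_binomial_weights:
  fixes p :: real
  shows "(\<Sum>k\<le>n. real (n choose k) * p ^ (n - k)) = (p + 1) ^ n"
  using binomial_ring[of 1 p n] by (simp add: add.commute)

lemma of_nat_Suc_times_binomial:
  "real (Suc j) * real (Suc m choose Suc j) = real (Suc m) * real (m choose j)"
  by (metis Suc_times_binomial of_nat_mult)

lemma sum_binomial_weights_first_moment:
  fixes p :: real
  shows "(p + 1) * (\<Sum>k\<le>n. real k * (real (n choose k) * p ^ (n - k))) = real n * (p + 1) ^ n"
proof (cases n)
  case (Suc m)
  have "(\<Sum>k\<le>Suc m. real k * (real (Suc m choose k) * p ^ (Suc m - k)))
      = (\<Sum>j\<le>m. real (Suc j) * real (Suc m choose Suc j) * p ^ (m - j))"
    by (subst sum.atMost_Suc_shift) (simp del: binomial_Suc_Suc of_nat_Suc add: mult.assoc)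
  also have "\<dots> = (\<Sum>j\<le>m. real (Suc m) * real (m choose j) * p ^ (m - j))"
    by (simp only: of_nat_Suc_times_binomial)
  also have "\<dots> = real (Suc m) * (\<Sum>j\<le>m. real (m choose j) * p ^ (m - j))"
    by (simp add: sum_distrib_left mult.assoc)
  finally show ?thesis
    using Suc by (simp add: sum_binomial_weights)
qed simp

lemma sum_binomial_weights_second_moment:
  fixes p :: real
  shows "(p + 1)^2 * (\<Sum>k\<le>n. (real k)^2 * (real (n choose k) * p ^ (n - k)))
    = (real n * (real n - 1) + real n * (p + 1)) * (p + 1) ^ n"
proof (cases n)
  case (Suc m)
  define S1 where "S1 = (\<Sum>j\<le>m. real j * (real (m choose j) * p ^ (m - j)))"
  have "(\<Sum>k\<le>Suc m. (real k)^2 * (real (Suc m choose k) * p ^ (Suc m - k)))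
      = (\<Sum>j\<le>m. real (Suc j) * (real (Suc j) * real (Suc m choose Suc j)) * p ^ (m - j))"
    by (subst sum.atMost_Suc_shift) (simp del: binomial_Suc_Suc of_nat_Suc add: power2_eq_square mult_ac)
  also have "\<dots> = (\<Sum>j\<le>m. real (Suc j) * (real (Suc m) * real (m choose j)) * p ^ (m - j))"
    by (simp only: of_nat_Suc_times_binomial)
  also have "\<dots> = real (Suc m) * (\<Sum>j\<le>m. (real j + 1) * (real (m choose j) * p ^ (m - j)))"
    by (simp add: sum_distrib_left ac_simps)
  also have "\<dots> = real (Suc m) * (S1 + (\<Sum>j\<le>m. real (m choose j) * p ^ (m - j)))"
    unfolding S1_def by (simp add: distrib_right sum.distrib)
  also have "\<dots> = real (Suc m) * (S1 + (p + 1) ^ m)"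
    by (simp add: sum_binomial_weights)
  finally have "(p + 1)^2 * (\<Sum>k\<le>Suc m. (real k)^2 * (real (Suc m choose k) * p ^ (Suc m - k)))
      = real (Suc m) * (p + 1) * ((p + 1) * S1 + (p + 1) * (p + 1) ^ m)"
    by (simp add: power2_eq_square algebra_simps)
  also have "\<dots> = real (Suc m) * (real m + (p + 1)) * (p + 1) ^ Suc m"
    unfolding S1_def sum_binomial_weights_first_moment by (simp add: algebra_simps)
  finally show ?thesis
    using Suc by (simp add: algebra_simps)
qed simp

definition euler_weight :: "real \<Rightarrow> nat \<Rightarrow> nat \<Rightarrow> real" where
  "euler_weight p n k = real (n choose k) * p ^ (n - k) / (p + 1) ^ n"

lemma euler_weight_nonneg: "p \<ge> 0 \<Longrightarrow> euler_weight p n k \<ge> 0"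
  by (simp add: euler_weight_def)

lemma sum_euler_weight:
  assumes "p + 1 \<noteq> 0"
  shows "(\<Sum>k\<le>n. euler_weight p n k) = 1"
  using assms by (simp add: euler_weight_def sum_divide_distrib[symmetric] sum_binomial_weights)

lemma euler_weight_second_moment:
  assumes p: "p + 1 \<noteq> 0"
  shows "(\<Sum>k\<le>n. euler_weight p n k * (real k - x)^2)
    = (real n / (p + 1) - x)^2 + real n * p / (p + 1)^2"
proof -
  define c where "c k = real (n choose k) * p ^ (n - k)" for k
  define W where "W = (p + 1) ^ n"
  have W: "W \<noteq> 0"
    using p by (simp add: W_def)
  have m0: "(\<Sum>k\<le>n. c k) = W"
    unfolding c_def W_def by (rule sum_binomial_weights)
  have m1: "(\<Sum>k\<le>n. real k * c k) = real n * W / (p + 1)"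
    using sum_binomial_weights_first_moment[of p n] p
    unfolding c_def W_def by (simp add: field_simps)
  have m2: "(\<Sum>k\<le>n. (real k)^2 * c k) = (real n * (real n - 1) + real n * (p + 1)) * W / (p + 1)^2"
    using sum_binomial_weights_second_moment[of p n] p
    unfolding c_def W_def by (simp add: field_simps)
  have "(\<Sum>k\<le>n. euler_weight p n k * (real k - x)^2) = (\<Sum>k\<le>n. c k * (real k - x)^2) / W"
    by (simp add: euler_weight_def c_def W_def sum_divide_distrib)
  also have "\<dots> = ((\<Sum>k\<le>n. (real k)^2 * c k) - 2 * x * (\<Sum>k\<le>n. real k * c k)
      + x^2 * (\<Sum>k\<le>n. c k)) / W"
    by (simp add: power2_diff algebra_simps sum.distrib sum_subtractf sum_distrib_left sum_distrib_right)
  also have "\<dots> = (real n / (p + 1) - x)^2 + real n * p / (p + 1)^2"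
  proof -
    define q where "q = p + 1"
    have "q \<noteq> 0"
      using p by (simp add: q_def)
    then show ?thesis
      unfolding m0 m1 m2 q_def[symmetric] using W
      by (simp add: field_simps power2_eq_square) (simp add: q_def algebra_simps)
  qed
  finally show ?thesis .
qed

text \<open>Choosing \<open>n \<approx> m (p + 1)\<close> centres the binomial weights at \<open>m\<close> with variance below \<open>m\<close>.\<close>
lemma euler_weight_concentrated:
  assumes p: "p > 0" and m: "m \<ge> 1"
  shows "\<exists>n. (\<Sum>k\<le>n. euler_weight p n k * (real k - real m)^2) \<le> 2 * real m"
proof
  define n where "n = nat \<lfloor>real m * (p + 1)\<rfloor>"
  define y where "y = real n / (p + 1)"
  have "real n = of_int \<lfloor>real m * (p + 1)\<rfloor>"
    using p unfolding n_def by simp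
  then have "real n \<le> real m * (p + 1)" "real m * (p + 1) < real n + 1"
    by linarith+
  then have y: "real m - 1 \<le> y" "y \<le> real m"
    using p unfolding y_def by (simp_all add: field_simps)
  have "(y - real m)^2 \<le> 1"
    using y mult_le_one[of "real m - y" "real m - y"] by (simp add: power2_eq_square algebra_simps)
  moreover have "real n * p / (p + 1)^2 \<le> real n * (p + 1) / (p + 1)^2"
    using p by (intro divide_right_mono mult_left_mono) auto
  moreover have "real n * (p + 1) / (p + 1)^2 = y"
    using p unfolding y_def by (simp add: power2_eq_square)
  ultimately show "(\<Sum>k\<le>n. euler_weight p n k * (real k - real m)^2) \<le> 2 * real m"
    using euler_weight_second_moment[of p n "real m"] p y m unfolding y_def by simp
qed

lemma inverse_sqrt_Suc_le: "1 / sqrt (real (Suc k)) \<le> 2 * (sqrt (real (Suc k)) - sqrt (real k))"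
proof -
  have "1 = (sqrt (real (Suc k)) - sqrt (real k)) * (sqrt (real (Suc k)) + sqrt (real k))"
    by (simp add: algebra_simps)
  also have "\<dots> \<le> (sqrt (real (Suc k)) - sqrt (real k)) * (2 * sqrt (real (Suc k)))"
    by (intro mult_left_mono) auto
  finally have "1 \<le> 2 * (sqrt (real (Suc k)) - sqrt (real k)) * sqrt (real (Suc k))"
    by (simp add: algebra_simps)
  then show ?thesis
    by (simp add: pos_divide_le_eq del: of_nat_Suc)
qed

text \<open>Increments of size \<open>C / sqrt k\<close> telescope against \<open>sqrt (k + 1) - sqrt k\<close>.\<close>
lemma dist_le_sqrt_dist_if_increments_le:
  fixes a :: "nat \<Rightarrow> real"
  assumes C: "C \<ge> 0" and inc: "\<And>k. k \<ge> 1 \<Longrightarrow> \<bar>a k - a (k - 1)\<bar> \<le> C / sqrt (real k)"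
  shows "\<bar>a k - a m\<bar> \<le> 2 * C * \<bar>sqrt (real k) - sqrt (real m)\<bar>"
proof -
  have step: "\<bar>a (Suc j) - a j\<bar> \<le> 2 * C * (sqrt (real (Suc j)) - sqrt (real j))" for j
  proof -
    have "\<bar>a (Suc j) - a j\<bar> \<le> C * (1 / sqrt (real (Suc j)))"
      using inc[of "Suc j"] by simp
    also have "\<dots> \<le> C * (2 * (sqrt (real (Suc j)) - sqrt (real j)))"
      by (rule mult_left_mono[OF inverse_sqrt_Suc_le C])
    finally show ?thesis
      by (simp add: algebra_simps)
  qed
  have "incseq (\<lambda>j. a j + 2 * C * sqrt (real j))" "decseq (\<lambda>j. a j - 2 * C * sqrt (real j))"
    using step[unfolded abs_le_iff] by (auto intro!: incseq_SucI decseq_SucI simp: algebra_simps)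
  then have "\<bar>a k - a m\<bar> \<le> 2 * C * \<bar>sqrt (real k) - sqrt (real m)\<bar>" if "m \<le> k" for k m
    using that incseqD[of _ m k] decseqD[of _ m k] by (fastforce simp: abs_le_iff algebra_simps)
  then show ?thesis
    by (metis abs_minus_commute nat_le_linear)
qed

lemma two_sqrt_dist_le:
  assumes "m \<ge> (1::nat)"
  shows "2 * \<bar>sqrt (real k) - sqrt (real m)\<bar> \<le> 1 + (real k - real m)^2 / real m"
proof -
  define d where "d = \<bar>sqrt (real k) - sqrt (real m)\<bar>"
  have m: "sqrt (real m) > 0"
    using assms by simp
  have "d * sqrt (real m) \<le> d * (sqrt (real k) + sqrt (real m))"
    unfolding d_def by (intro mult_left_mono) auto
  also have "\<dots> = \<bar>(sqrt (real k) - sqrt (real m)) * (sqrt (real k) + sqrt (real m))\<bar>"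
    unfolding d_def by (simp add: abs_mult)
  also have "\<dots> = \<bar>real k - real m\<bar>"
    by (simp add: algebra_simps)
  finally have "d \<le> \<bar>real k - real m\<bar> / sqrt (real m)"
    using m by (simp add: pos_le_divide_eq)
  then have "d^2 \<le> (\<bar>real k - real m\<bar> / sqrt (real m))^2"
    by (rule power_mono) (simp add: d_def)
  also have "\<dots> = (real k - real m)^2 / real m"
    by (simp add: power_divide)
  finally have "d^2 \<le> (real k - real m)^2 / real m" .
  moreover have "2 * d \<le> 1 + d^2"
    using sum_squares_ge_zero[of "d - 1" 0] by (simp add: power2_eq_square algebra_simps)
  ultimately show ?thesis
    unfolding d_def by linarith
qed

lemma euler_tauberian_bound:
  fixes a :: "nat \<Rightarrow> real"
  assumes p: "p > 0" and C: "C \<ge> 0"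
    and inc: "\<And>k. k \<ge> 1 \<Longrightarrow> \<bar>a k - a (k - 1)\<bar> \<le> C / sqrt (real k)"
    and means: "\<And>n. \<bar>\<Sum>k\<le>n. euler_weight p n k * a k\<bar> \<le> B"
  shows "\<bar>a m\<bar> \<le> B + 3 * C"
proof (cases "m = 0")
  case True
  then show ?thesis
    using means[of 0] C by (simp add: euler_weight_def)
next
  case False
  then have m: "m \<ge> 1"
    by simp
  then obtain n where var: "(\<Sum>k\<le>n. euler_weight p n k * (real k - real m)^2) \<le> 2 * real m"
    using euler_weight_concentrated[OF p] by blast
  define w where "w = euler_weight p n"
  have w: "w k \<ge> 0" for k
    using p by (simp add: w_def euler_weight_nonneg)
  have sum_w: "(\<Sum>k\<le>n. w k) = 1"
    using p by (simp add: w_def sum_euler_weight)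
  have dev: "\<bar>a m - a k\<bar> \<le> C * (1 + (real k - real m)^2 / real m)" for k
    using dist_le_sqrt_dist_if_increments_le[OF C inc, of k m]
      mult_left_mono[OF two_sqrt_dist_le[OF m, of k] C]
    by (simp add: abs_minus_commute)
  have "\<bar>a m - (\<Sum>k\<le>n. w k * a k)\<bar> = \<bar>\<Sum>k\<le>n. w k * (a m - a k)\<bar>"
    using sum_w by (simp add: algebra_simps sum_subtractf sum_distrib_left[symmetric])
  also have "\<dots> \<le> (\<Sum>k\<le>n. w k * (C * (1 + (real k - real m)^2 / real m)))"
    using w dev by (intro order.trans[OF sum_abs] sum_mono) (simp add: abs_mult mult_left_mono)
  also have "\<dots> = C * ((\<Sum>k\<le>n. w k) + (\<Sum>k\<le>n. w k * (real k - real m)^2) / real m)"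
    by (simp add: algebra_simps sum.distrib sum_distrib_left sum_divide_distrib)
  also have "\<dots> \<le> C * (1 + 2)"
    using var m C sum_w by (intro mult_left_mono add_mono) (simp_all add: w_def pos_divide_le_eq)
  also have "\<dots> = 3 * C"
    by simp
  finally show ?thesis
    using means[of n] unfolding w_def by linarith
qed

definition levels_bounded_by :: "fuzzy \<Rightarrow> real \<Rightarrow> bool" where
  "levels_bounded_by w K \<longleftrightarrow>
     (\<forall>\<alpha>. 0 < \<alpha> \<and> \<alpha> \<le> 1 \<longrightarrow> levelset w \<alpha> \<noteq> {} \<and> levelset w \<alpha> \<subseteq> {-K..K})"

lemma levels_bounded_byD:
  assumes "levels_bounded_by w K" "0 < \<alpha>" "\<alpha> \<le> 1"
  shows "levelset w \<alpha> \<noteq> {}" "levelset w \<alpha> \<subseteq> {-K..K}"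
  using assms unfolding levels_bounded_by_def by blast+

lemma lo_le_hi_if_mem_levelset:
  assumes "levels_bounded_by w K" "0 < \<alpha>" "\<alpha> \<le> 1" "t \<in> levelset w \<alpha>"
  shows "lo w \<alpha> \<le> t \<and> t \<le> hi w \<alpha>"
proof -
  have "bdd_below (levelset w \<alpha>)" "bdd_above (levelset w \<alpha>)"
    using levels_bounded_byD(2)[OF assms(1-3)] by (auto intro: bdd_below_mono bdd_above_mono)
  then show ?thesis
    unfolding lo_def hi_def using assms(4) by (auto intro: cInf_lower cSup_upper)
qed

lemma lo_hi_bounds:
  assumes "levels_bounded_by w K" "0 < \<alpha>" "\<alpha> \<le> 1"
  shows "-K \<le> lo w \<alpha> \<and> lo w \<alpha> \<le> hi w \<alpha> \<and> hi w \<alpha> \<le> K"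
proof -
  note ne = levels_bounded_byD(1)[OF assms] and sub = levels_bounded_byD(2)[OF assms]
  obtain t where "t \<in> levelset w \<alpha>"
    using ne by blast
  moreover have "-K \<le> lo w \<alpha>" "hi w \<alpha> \<le> K"
    unfolding lo_def hi_def using ne sub by (auto intro!: cInf_greatest cSup_least)
  ultimately show ?thesis
    using lo_le_hi_if_mem_levelset[OF assms] by force
qed

lemma fuzzy_number_levels_bounded:
  assumes "fuzzy_number u"
  shows "\<exists>K. levels_bounded_by u K"
proof -
  obtain t0 where t0: "u t0 = 1"
    using assms unfolding fuzzy_number_def by blast
  have "bounded (closure {t. u t > 0})"
    using assms unfolding fuzzy_number_def by (blast intro: compact_imp_bounded)
  then obtain K where K: "\<And>t. t \<in> closure {t. u t > 0} \<Longrightarrow> \<bar>t\<bar> \<le> K"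
    unfolding bounded_iff by auto
  have "levelset u \<alpha> \<noteq> {} \<and> levelset u \<alpha> \<subseteq> {-K..K}" if "0 < \<alpha>" "\<alpha> \<le> 1" for \<alpha>
  proof
    have levelset: "levelset u \<alpha> = {t. \<alpha> \<le> u t}"
      using that by (simp add: levelset_def)
    have "t0 \<in> levelset u \<alpha>"
      using t0 that unfolding levelset by simp
    then show "levelset u \<alpha> \<noteq> {}"
      by blast
    show "levelset u \<alpha> \<subseteq> {-K..K}"
    proof
      fix t
      assume "t \<in> levelset u \<alpha>"
      then have "t \<in> closure {t. u t > 0}"
        using that closure_subset unfolding levelset by fastforce
      then show "t \<in> {-K..K}"
        using K[of t] by (simp add: abs_le_iff)
    qed
  qed
  then show ?thesis
    unfolding levels_bounded_by_def by blast
qed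

text \<open>\<open>L\<close> and \<open>H\<close> are not assumed monotone, so the \<open>\<alpha>\<close>-level of \<open>from_levels L H\<close> may be larger
  than \<open>[L \<alpha>, H \<alpha>]\<close>; only this inclusion is available.\<close>
lemma
  assumes "\<And>\<beta>. 0 < \<beta> \<Longrightarrow> \<beta> \<le> 1 \<Longrightarrow> -K \<le> L \<beta> \<and> L \<beta> \<le> H \<beta> \<and> H \<beta> \<le> K"
  shows levels_bounded_by_from_levels: "levels_bounded_by (from_levels L H) K"
    and from_levels_lo_hi:
      "\<And>\<alpha>. 0 < \<alpha> \<Longrightarrow> \<alpha> \<le> 1 \<Longrightarrow> lo (from_levels L H) \<alpha> \<le> L \<alpha> \<and> H \<alpha> \<le> hi (from_levels L H) \<alpha>"
proof -
  define A where "A t = {\<alpha>. 0 < \<alpha> \<and> \<alpha> \<le> 1 \<and> L \<alpha> \<le> t \<and> t \<le> H \<alpha>}" for t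
  have bdd: "bdd_above ({0} \<union> A t)" for t
    unfolding A_def by (rule bdd_aboveI[of _ 1]) auto
  have levelset: "levelset (from_levels L H) \<alpha> = {t. \<alpha> \<le> Sup ({0} \<union> A t)}" if "0 < \<alpha>" for \<alpha>
    using that unfolding levelset_def from_levels_def A_def by simp
  have between: "t \<in> levelset (from_levels L H) \<alpha>"
    if "0 < \<alpha>" "\<alpha> \<le> 1" "L \<alpha> \<le> t" "t \<le> H \<alpha>" for \<alpha> t
    using that cSup_upper[OF _ bdd, of \<alpha> t] unfolding levelset[OF that(1)] A_def by auto
  have "t \<in> {-K..K}" if "0 < \<alpha>" "t \<in> levelset (from_levels L H) \<alpha>" for \<alpha> t
  proof -
    have "A t \<noteq> {}"
      using that unfolding levelset[OF that(1)] by auto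
    then obtain \<beta> where "0 < \<beta>" "\<beta> \<le> 1" "L \<beta> \<le> t" "t \<le> H \<beta>"
      unfolding A_def by blast
    then show ?thesis
      using assms[of \<beta>] by auto
  qed
  moreover have "levelset (from_levels L H) \<alpha> \<noteq> {}" if "0 < \<alpha>" "\<alpha> \<le> 1" for \<alpha>
    using between[OF that] assms[OF that] by blast
  ultimately show bounded: "levels_bounded_by (from_levels L H) K"
    unfolding levels_bounded_by_def by blast
  show "lo (from_levels L H) \<alpha> \<le> L \<alpha> \<and> H \<alpha> \<le> hi (from_levels L H) \<alpha>"
    if "0 < \<alpha>" "\<alpha> \<le> 1" for \<alpha>
    using lo_le_hi_if_mem_levelset[OF bounded that] between[OF that] assms[OF that] by blast
qed

lemma from_levels_cong:
  assumes "\<And>\<beta>. 0 < \<beta> \<Longrightarrow> \<beta> \<le> 1 \<Longrightarrow> L \<beta> = L' \<beta> \<and> H \<beta> = H' \<beta>"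
  shows "from_levels L H = from_levels L' H'"
  unfolding from_levels_def using assms by (intro ext arg_cong[where f = Sup]) auto

lemma
  assumes "levels_bounded_by u K1" "levels_bounded_by v K2"
  shows levels_bounded_by_fadd: "levels_bounded_by (fadd u v) (K1 + K2)"
    and fadd_lo_hi: "\<And>\<alpha>. 0 < \<alpha> \<Longrightarrow> \<alpha> \<le> 1 \<Longrightarrow>
      lo (fadd u v) \<alpha> \<le> lo u \<alpha> + lo v \<alpha> \<and> hi u \<alpha> + hi v \<alpha> \<le> hi (fadd u v) \<alpha>"
proof -
  have bounds: "-(K1 + K2) \<le> lo u \<beta> + lo v \<beta> \<and> lo u \<beta> + lo v \<beta> \<le> hi u \<beta> + hi v \<beta>
      \<and> hi u \<beta> + hi v \<beta> \<le> K1 + K2"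
    if "0 < \<beta>" "\<beta> \<le> 1" for \<beta>
    using lo_hi_bounds[OF assms(1) that] lo_hi_bounds[OF assms(2) that] by linarith
  show "levels_bounded_by (fadd u v) (K1 + K2)"
    unfolding fadd_def by (rule levels_bounded_by_from_levels[OF bounds])
  show "lo (fadd u v) \<alpha> \<le> lo u \<alpha> + lo v \<alpha> \<and> hi u \<alpha> + hi v \<alpha> \<le> hi (fadd u v) \<alpha>"
    if "0 < \<alpha>" "\<alpha> \<le> 1" for \<alpha>
    unfolding fadd_def by (rule from_levels_lo_hi[OF bounds that])
qed

lemma
  assumes "levels_bounded_by u K" "c \<ge> 0"
  shows levels_bounded_by_fscale: "levels_bounded_by (fscale c u) (c * K)"
    and fscale_lo_hi: "\<And>\<alpha>. 0 < \<alpha> \<Longrightarrow> \<alpha> \<le> 1 \<Longrightarrow>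
      lo (fscale c u) \<alpha> \<le> c * lo u \<alpha> \<and> c * hi u \<alpha> \<le> hi (fscale c u) \<alpha>"
proof -
  have bounds: "-(c * K) \<le> c * lo u \<beta> \<and> c * lo u \<beta> \<le> c * hi u \<beta> \<and> c * hi u \<beta> \<le> c * K"
    if "0 < \<beta>" "\<beta> \<le> 1" for \<beta>
    using lo_hi_bounds[OF assms(1) that] mult_left_mono[OF _ assms(2)] by (metis minus_mult_right)
  have fscale: "fscale c u = from_levels (\<lambda>\<beta>. c * lo u \<beta>) (\<lambda>\<beta>. c * hi u \<beta>)"
    unfolding fscale_def using bounds by (intro from_levels_cong) (simp add: min_def max_def)
  show "levels_bounded_by (fscale c u) (c * K)"
    unfolding fscale by (rule levels_bounded_by_from_levels[OF bounds])
  show "lo (fscale c u) \<alpha> \<le> c * lo u \<alpha> \<and> c * hi u \<alpha> \<le> hi (fscale c u) \<alpha>"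
    if "0 < \<alpha>" "\<alpha> \<le> 1" for \<alpha>
    unfolding fscale by (rule from_levels_lo_hi[OF bounds that])
qed

lemma levels_bounded_by_fsum_upto:
  assumes "\<And>k. k \<le> n \<Longrightarrow> levels_bounded_by (f k) (K k)"
  shows "levels_bounded_by (fsum_upto f n) (\<Sum>k\<le>n. K k)"
  using assms
proof (induction n)
  case (Suc n)
  then show ?case
    by (simp add: levels_bounded_by_fadd)
qed simp

lemma fsum_upto_lo_hi:
  assumes bounded: "\<And>k. k \<le> n \<Longrightarrow> levels_bounded_by (f k) (K k)" and "0 < \<alpha>" "\<alpha> \<le> 1"
  shows "lo (fsum_upto f n) \<alpha> \<le> (\<Sum>k\<le>n. lo (f k) \<alpha>) \<and> (\<Sum>k\<le>n. hi (f k) \<alpha>) \<le> hi (fsum_upto f n) \<alpha>"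
  using bounded
proof (induction n)
  case (Suc n)
  have "levels_bounded_by (fsum_upto f n) (\<Sum>k\<le>n. K k)"
    using Suc.prems by (simp add: levels_bounded_by_fsum_upto)
  from fadd_lo_hi[OF this Suc.prems[of "Suc n"] assms(2,3)] Suc.IH Suc.prems
  show ?case
    by simp
qed simp

lemma
  assumes p: "p \<ge> 0" and bounded: "\<And>k. levels_bounded_by (u k) (K k)"
  shows levels_bounded_by_euler_mean:
      "levels_bounded_by (euler_mean p u n) (\<Sum>k\<le>n. euler_weight p n k * K k)"
    and euler_mean_lo_hi: "\<And>\<alpha>. 0 < \<alpha> \<Longrightarrow> \<alpha> \<le> 1 \<Longrightarrow>
      lo (euler_mean p u n) \<alpha> \<le> (\<Sum>k\<le>n. euler_weight p n k * lo (u k) \<alpha>)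
      \<and> (\<Sum>k\<le>n. euler_weight p n k * hi (u k) \<alpha>) \<le> hi (euler_mean p u n) \<alpha>"
proof -
  define c where "c k = real (n choose k) * p ^ (n - k)" for k
  define s where "s = 1 / (p + 1) ^ n"
  define f where "f = (\<lambda>k. fscale (c k) (u k))"
  have c: "c k \<ge> 0" for k
    using p by (simp add: c_def)
  have s: "s \<ge> 0"
    using p by (simp add: s_def)
  have weight: "euler_weight p n k = s * c k" for k
    by (simp add: euler_weight_def s_def c_def)
  have mean: "euler_mean p u n = fscale s (fsum_upto f n)"
    by (simp add: euler_mean_def s_def f_def c_def)
  have f: "levels_bounded_by (f k) (c k * K k)" for k
    unfolding f_def by (rule levels_bounded_by_fscale[OF bounded c])
  note sum = levels_bounded_by_fsum_upto[of n f, OF f]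
  show "levels_bounded_by (euler_mean p u n) (\<Sum>k\<le>n. euler_weight p n k * K k)"
    using levels_bounded_by_fscale[OF sum s]
    by (simp add: mean weight sum_distrib_left mult.assoc)
  fix \<alpha> :: real
  assume \<alpha>: "0 < \<alpha>" "\<alpha> \<le> 1"
  have "lo (fsum_upto f n) \<alpha> \<le> (\<Sum>k\<le>n. lo (f k) \<alpha>)"
    using fsum_upto_lo_hi[of n f, OF f \<alpha>] by blast
  also have "\<dots> \<le> (\<Sum>k\<le>n. c k * lo (u k) \<alpha>)"
    using fscale_lo_hi[OF bounded c \<alpha>] unfolding f_def by (intro sum_mono) blast
  finally have lo: "lo (fsum_upto f n) \<alpha> \<le> (\<Sum>k\<le>n. c k * lo (u k) \<alpha>)" .
  have "(\<Sum>k\<le>n. c k * hi (u k) \<alpha>) \<le> (\<Sum>k\<le>n. hi (f k) \<alpha>)"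
    using fscale_lo_hi[OF bounded c \<alpha>] unfolding f_def by (intro sum_mono) blast
  also have "\<dots> \<le> hi (fsum_upto f n) \<alpha>"
    using fsum_upto_lo_hi[of n f, OF f \<alpha>] by blast
  finally have hi: "(\<Sum>k\<le>n. c k * hi (u k) \<alpha>) \<le> hi (fsum_upto f n) \<alpha>" .
  show "lo (euler_mean p u n) \<alpha> \<le> (\<Sum>k\<le>n. euler_weight p n k * lo (u k) \<alpha>)
      \<and> (\<Sum>k\<le>n. euler_weight p n k * hi (u k) \<alpha>) \<le> hi (euler_mean p u n) \<alpha>"
    using fscale_lo_hi[OF sum s \<alpha>] mult_left_mono[OF lo s] mult_left_mono[OF hi s]
    unfolding mean weight by (simp add: sum_distrib_left mult.assoc)
qed

lemma level_dist_le_fdist: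
  assumes "levels_bounded_by u K1" "levels_bounded_by v K2" "0 \<le> \<alpha>" "\<alpha> \<le> 1"
  shows "\<bar>lo u \<alpha> - lo v \<alpha>\<bar> \<le> fdist u v \<and> \<bar>hi u \<alpha> - hi v \<alpha>\<bar> \<le> fdist u v"
proof -
  define g where "g \<beta> = max \<bar>lo u \<beta> - lo v \<beta>\<bar> \<bar>hi u \<beta> - hi v \<beta>\<bar>" for \<beta>
  have "g \<beta> \<le> max (g 0) (K1 + K2)" if "\<beta> \<in> {0..1}" for \<beta>
  proof (cases "\<beta> = 0")
    case False
    then have "0 < \<beta>" "\<beta> \<le> 1"
      using that by auto
    then have "\<bar>lo u \<beta> - lo v \<beta>\<bar> \<le> K1 + K2" "\<bar>hi u \<beta> - hi v \<beta>\<bar> \<le> K1 + K2"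
      using lo_hi_bounds[OF assms(1)] lo_hi_bounds[OF assms(2)] unfolding abs_le_iff by fastforce+
    then have "g \<beta> \<le> K1 + K2"
      by (simp add: g_def)
    then show ?thesis
      by simp
  qed simp
  then have "bdd_above (g ` {0..1})"
    by (intro bdd_aboveI2)
  then have "g \<alpha> \<le> fdist u v"
    unfolding fdist_def g_def[symmetric] using assms(3,4) by (intro cSUP_upper) auto
  then show ?thesis
    by (simp add: g_def)
qed

lemma lo_hi_fzero:
  assumes "0 \<le> \<alpha>" "\<alpha> \<le> 1"
  shows "lo fzero \<alpha> = 0 \<and> hi fzero \<alpha> = 0"
proof -
  have "{t. fzero t > 0} = {0}"
    by (auto simp: fzero_def)
  then have "levelset fzero \<alpha> = {0}"
    using assms by (auto simp: levelset_def fzero_def)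
  then show ?thesis
    by (simp add: lo_def hi_def)
qed

lemma abs_Inf_Sup_le:
  fixes S :: "real set"
  assumes "S \<subseteq> {-R..R}" "S \<noteq> {}"
  shows "\<bar>Inf S\<bar> \<le> R \<and> \<bar>Sup S\<bar> \<le> R"
proof -
  obtain x where x: "x \<in> S"
    using assms(2) by blast
  have "bdd_below S" "bdd_above S"
    using assms(1) by (auto intro: bdd_below_mono bdd_above_mono)
  then have "Inf S \<le> x" "x \<le> Sup S"
    using x by (auto intro: cInf_lower cSup_upper)
  moreover have "-R \<le> Inf S" "Sup S \<le> R"
    using assms by (auto intro!: cInf_greatest cSup_least)
  ultimately show ?thesis
    using x assms(1) unfolding abs_le_iff by auto
qed

lemma fdist_fzero_le:
  assumes u: "fuzzy_number u" and bounded: "levels_bounded_by u K"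
    and R: "\<And>\<alpha>. 0 < \<alpha> \<Longrightarrow> \<alpha> \<le> 1 \<Longrightarrow> \<bar>lo u \<alpha>\<bar> \<le> R \<and> \<bar>hi u \<alpha>\<bar> \<le> R"
  shows "fdist u fzero \<le> R"
proof -
  have "{t. u t > 0} \<subseteq> {-R..R}"
  proof
    fix t
    assume "t \<in> {t. u t > 0}"
    then have \<beta>: "0 < min (u t) 1" "min (u t) 1 \<le> 1" and t: "t \<in> levelset u (min (u t) 1)"
      by (auto simp: levelset_def)
    have "lo u (min (u t) 1) \<le> t \<and> t \<le> hi u (min (u t) 1)"
      by (rule lo_le_hi_if_mem_levelset[OF bounded \<beta> t])
    with R[OF \<beta>] show "t \<in> {-R..R}"
      unfolding atLeastAtMost_iff abs_le_iff by linarith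
  qed
  then have "levelset u 0 \<subseteq> {-R..R}"
    unfolding levelset_def by (simp add: closure_minimal)
  moreover obtain t0 where "u t0 = 1"
    using u unfolding fuzzy_number_def by blast
  then have "t0 \<in> levelset u 0"
    using closure_subset[of "{t. u t > 0}"] unfolding levelset_def by auto
  then have "levelset u 0 \<noteq> {}"
    by blast
  ultimately have "\<bar>lo u 0\<bar> \<le> R \<and> \<bar>hi u 0\<bar> \<le> R"
    unfolding lo_def hi_def by (rule abs_Inf_Sup_le)
  then have "max \<bar>lo u \<alpha> - lo fzero \<alpha>\<bar> \<bar>hi u \<alpha> - hi fzero \<alpha>\<bar> \<le> R" if "\<alpha> \<in> {0..1}" for \<alpha>
    using that lo_hi_fzero[of \<alpha>] R[of \<alpha>] by (cases "\<alpha> = 0") auto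
  then show ?thesis
    unfolding fdist_def by (intro cSUP_least) auto
qed

lemma bigo_one_imp_Bseq:
  fixes f :: "nat \<Rightarrow> real"
  assumes "f \<in> O(\<lambda>_. 1)"
  shows "Bseq f"
proof -
  obtain c where "eventually (\<lambda>n. norm (f n) \<le> c * norm (1::real)) sequentially"
    using assms by (elim landau_o.bigE)
  then have "eventually (\<lambda>n. norm (f n) \<le> norm c) sequentially"
    by (rule eventually_mono) simp
  then show ?thesis
    by (rule Bseq_eventually_mono) simp
qed

lemma euler_weighted_levels_bounded:
  assumes p: "p > 0" and u: "\<And>k. levels_bounded_by (u k) (K k)" and \<mu>: "levels_bounded_by \<mu> K\<mu>"
    and summable: "Ep_summable_to p u \<mu>"
  obtains B where "\<And>n \<alpha>. 0 < \<alpha> \<Longrightarrow> \<alpha> \<le> 1 \<Longrightarrow>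
      \<bar>\<Sum>k\<le>n. euler_weight p n k * lo (u k) \<alpha>\<bar> \<le> B \<and> \<bar>\<Sum>k\<le>n. euler_weight p n k * hi (u k) \<alpha>\<bar> \<le> B"
proof -
  have "convergent (\<lambda>n. fdist (euler_mean p u n) \<mu>)"
    using summable unfolding Ep_summable_to_def convergent_def by blast
  then have "Bseq (\<lambda>n. fdist (euler_mean p u n) \<mu>)"
    by (rule convergent_imp_Bseq)
  then obtain D where bounded: "\<forall>n. norm (fdist (euler_mean p u n) \<mu>) \<le> D"
    by (rule BseqE)
  have D: "fdist (euler_mean p u n) \<mu> \<le> D" for n
    using bounded[rule_format, of n] by (simp add: abs_le_iff)
  have "\<bar>\<Sum>k\<le>n. euler_weight p n k * lo (u k) \<alpha>\<bar> \<le> K\<mu> + D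
      \<and> \<bar>\<Sum>k\<le>n. euler_weight p n k * hi (u k) \<alpha>\<bar> \<le> K\<mu> + D"
    if \<alpha>: "0 < \<alpha>" "\<alpha> \<le> 1" for n \<alpha>
  proof -
    have lo_le_hi: "(\<Sum>k\<le>n. euler_weight p n k * lo (u k) \<alpha>) \<le> (\<Sum>k\<le>n. euler_weight p n k * hi (u k) \<alpha>)"
      using lo_hi_bounds[OF u \<alpha>] p
      by (intro sum_mono mult_left_mono) (simp_all add: euler_weight_nonneg)
    have mean: "levels_bounded_by (euler_mean p u n) (\<Sum>k\<le>n. euler_weight p n k * K k)"
      by (rule levels_bounded_by_euler_mean[OF less_imp_le[OF p] u])
    show ?thesis
      using lo_le_hi euler_mean_lo_hi[of p u K, OF less_imp_le[OF p] u \<alpha>, where n = n]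
        level_dist_le_fdist[OF mean \<mu> less_imp_le[OF \<alpha>(1)] \<alpha>(2)] lo_hi_bounds[OF \<mu> \<alpha>] D[of n]
      unfolding abs_le_iff by linarith
  qed
  then show ?thesis
    by (rule that)
qed

lemma level_increments_le:
  assumes u: "\<And>k. levels_bounded_by (u k) (K k)"
    and C: "\<And>n. sqrt (real n) * fdist (u (n - 1)) (u n) \<le> C"
    and "k \<ge> 1" "0 \<le> \<alpha>" "\<alpha> \<le> 1"
  shows "\<bar>lo (u k) \<alpha> - lo (u (k - 1)) \<alpha>\<bar> \<le> C / sqrt (real k)
    \<and> \<bar>hi (u k) \<alpha> - hi (u (k - 1)) \<alpha>\<bar> \<le> C / sqrt (real k)"
proof -
  have "fdist (u (k - 1)) (u k) \<le> C / sqrt (real k)"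
    using C[of k] \<open>k \<ge> 1\<close> by (simp add: pos_le_divide_eq mult.commute)
  then show ?thesis
    using level_dist_le_fdist[OF u u \<open>0 \<le> \<alpha>\<close> \<open>\<alpha> \<le> 1\<close>, of "k - 1" k]
    by (simp add: abs_minus_commute)
qed

lemma uniform_level_bound:
  assumes p: "p > 0" and u: "\<And>k. levels_bounded_by (u k) (K k)"
    and "C \<ge> 0" and C: "\<And>n. sqrt (real n) * fdist (u (n - 1)) (u n) \<le> C"
    and B: "\<And>n \<alpha>. 0 < \<alpha> \<Longrightarrow> \<alpha> \<le> 1 \<Longrightarrow>
      \<bar>\<Sum>k\<le>n. euler_weight p n k * lo (u k) \<alpha>\<bar> \<le> B \<and> \<bar>\<Sum>k\<le>n. euler_weight p n k * hi (u k) \<alpha>\<bar> \<le> B"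
    and \<alpha>: "0 < \<alpha>" "\<alpha> \<le> 1"
  shows "\<bar>lo (u n) \<alpha>\<bar> \<le> B + 3 * C \<and> \<bar>hi (u n) \<alpha>\<bar> \<le> B + 3 * C"
proof
  note increments = level_increments_le[of u K, OF u C _ less_imp_le[OF \<alpha>(1)] \<alpha>(2)]
  show "\<bar>lo (u n) \<alpha>\<bar> \<le> B + 3 * C"
    by (rule euler_tauberian_bound[OF p \<open>C \<ge> 0\<close>]) (use increments B[OF \<alpha>] in blast)+
  show "\<bar>hi (u n) \<alpha>\<bar> \<le> B + 3 * C"
    by (rule euler_tauberian_bound[OF p \<open>C \<ge> 0\<close>]) (use increments B[OF \<alpha>] in blast)+
qed

theorem mainTheorem3:
  fixes p :: real and u :: "nat \<Rightarrow> fuzzy" and \<mu> :: fuzzy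
  assumes "p > 0"
    and "\<And>n. fuzzy_number (u n)"
    and "fuzzy_number \<mu>"
    and "Ep_summable_to p u \<mu>"
    and "(\<lambda>n. sqrt (real n) * fdist (u (n - 1)) (u n)) \<in> O(\<lambda>_. 1)"
  shows "\<exists>M > 0. \<forall>n. fdist (u n) fzero < M"
proof -
  obtain K where K: "\<And>k. levels_bounded_by (u k) (K k)"
    using fuzzy_number_levels_bounded[OF assms(2)] by metis
  obtain K\<mu> where K\<mu>: "levels_bounded_by \<mu> K\<mu>"
    using fuzzy_number_levels_bounded[OF assms(3)] by blast
  obtain B where B: "\<And>n \<alpha>. 0 < \<alpha> \<Longrightarrow> \<alpha> \<le> 1 \<Longrightarrow>
      \<bar>\<Sum>k\<le>n. euler_weight p n k * lo (u k) \<alpha>\<bar> \<le> B \<and> \<bar>\<Sum>k\<le>n. euler_weight p n k * hi (u k) \<alpha>\<bar> \<le> B"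
    using euler_weighted_levels_bounded[OF assms(1) K K\<mu> assms(4)] by blast
  obtain C where "C > 0" and bounded: "\<forall>n. norm (sqrt (real n) * fdist (u (n - 1)) (u n)) \<le> C"
    using bigo_one_imp_Bseq[OF assms(5)] by (rule BseqE)
  have C: "sqrt (real n) * fdist (u (n - 1)) (u n) \<le> C" for n
    using bounded[rule_format, of n] by (simp add: abs_le_iff)
  have "\<bar>lo (u n) \<alpha>\<bar> \<le> B + 3 * C \<and> \<bar>hi (u n) \<alpha>\<bar> \<le> B + 3 * C" if "0 < \<alpha>" "\<alpha> \<le> 1" for n \<alpha>
    using uniform_level_bound[OF assms(1) K less_imp_le[OF \<open>C > 0\<close>] C B that] .
  then have bound: "fdist (u n) fzero \<le> B + 3 * C" for n
    by (rule fdist_fzero_le[OF assms(2) K])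
  show ?thesis
  proof (intro exI conjI allI)
    show "\<bar>B + 3 * C\<bar> + 1 > 0"
      by simp
    show "fdist (u n) fzero < \<bar>B + 3 * C\<bar> + 1" for n
      using bound[of n] abs_ge_self[of "B + 3 * C"] by linarith
  qed
qed

end
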